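(* Let $\mathcal{H}$ be a real Hilbert space, $f:\mathcal{H}\to\mathbb{R}$ $\mu$-strongly convex and $L$-smooth with $0<\mu<L<\infty$, $g:\mathcal{H}\to\mathbb{R}\cup\{+\infty\}$ convex, proper and lower semicontinuous, $q=\mu/L$, and $x^\star$ the unique minimizer of $f+g$. Let the Prox-TMM iterates and the quantities $\mathcal{V}_k^\infty$ be as defined in the context. Then for every $k\in\mathbb{N}$ (i.e. $k\ge1$), $$\mathcal{V}_{k+1}^\infty\le(1-\sqrt q)^2\,\mathcal{V}_k^\infty.$$
   Context: $\operatorname{Prox}^{\gamma}_g(x)=\operatorname{argmin}_z\big(g(z)+\frac{1}{2\gamma}\|x-z\|^2\big)$. Prox-TMM from $x^0\in\mathcal{H}$: $z^0=x^0$, and for $k\ge0$: $y^k=\frac{2\sqrt q}{1+\sqrt q}z^k+\frac{1-\sqrt q}{1+\sqrt q}x^k$, $\bar z^{k+1}=(1-\sqrt q)z^k+\sqrt q\,y^k-\frac{1}{\sqrt qL}\nabla f(y^k)$, $z^{k+1}=\operatorname{Prox}^{1/(\sqrt qL)}_g(\bar z^{k+1})$, $x^{k+1}=y^k-\frac1L\nabla f(y^k)-\sqrt q(\bar z^{k+1}-z^{k+1})$. Define $\mathcal{I}_f(x,y)=f(x)-f(y)-\langle\nabla f(y),x-y\rangle-\frac{\mu}{2}\|x-y\|^2-\frac{1}{2(L-\mu)}\|\nabla f(x)-\nabla f(y)-\mu(x-y)\|^2$ and $\mathcal{I}_g(x,y,s)=g(x)-g(y)-\langle s,x-y\rangle$.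 For $k\ge1$ let $s_g^k=\sqrt qL(\bar z^k-z^k)$ (so $s_g^k\in\partial g(z^k)$), let $s_g^\star=-\nabla f(x^\star)$, and $$\mathcal{V}_k^\infty=(1-q)\mathcal{I}_f(y^{k-1},x^\star)+q\,\mathcal{I}_g(x^\star,z^k,s_g^k)+\sqrt q(\sqrt q-1)\mathcal{I}_g(z^k,x^\star,s_g^\star)+\frac1{2L}\|s_g^k-s_g^\star\|^2+\mu\|z^k-x^\star\|^2.$$ *)

theory Defs
  imports "HOL-Analysis.Analysis"
begin

text \<open>An extended-real-valued function g : H -> R \<union> {+inf} is represented by its
  effective domain D (where g is finite) and its real values on D; outside D,
  g is +inf.\<close>

definition proper_convex_lsc :: "'a::real_normed_vector set \<Rightarrow> ('a \<Rightarrow> real) \<Rightarrow> bool" where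
  "proper_convex_lsc D g \<longleftrightarrow> D \<noteq> {} \<and> convex_on D g \<and> closed {(x, t). x \<in> D \<and> g x \<le> t}"

definition prox :: "'a::real_inner set \<Rightarrow> ('a \<Rightarrow> real) \<Rightarrow> real \<Rightarrow> 'a \<Rightarrow> 'a" where
  "prox D g \<gamma> x = (SOME z. z \<in> D \<and>
     (\<forall>w\<in>D. g z + 1 / (2 * \<gamma>) * (norm (x - z))\<^sup>2 \<le> g w + 1 / (2 * \<gamma>) * (norm (x - w))\<^sup>2))"

definition I_f :: "('a::real_inner \<Rightarrow> real) \<Rightarrow> ('a \<Rightarrow> 'a) \<Rightarrow> real \<Rightarrow> real \<Rightarrow> 'a \<Rightarrow> 'a \<Rightarrow> real" where
  "I_f f gradf \<mu> L x y = f x - f y - inner (gradf y) (x - y) - \<mu> / 2 * (norm (x - y))\<^sup>2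
     - 1 / (2 * (L - \<mu>)) * (norm (gradf x - gradf y - \<mu> *\<^sub>R (x - y)))\<^sup>2"

definition I_g :: "('a::real_inner \<Rightarrow> real) \<Rightarrow> 'a \<Rightarrow> 'a \<Rightarrow> 'a \<Rightarrow> real" where
  "I_g g x y s = g x - g y - inner s (x - y)"

end

theory Submission
  imports Defs
begin

(*
  Write s = sqrt q, so that mu = s^2 L.  The proof rests on an exact identity: (1 - s)^2 V_k - V_(k+1)
  is a combination with nonnegative coefficients of
  - the interpolation gaps I_f(y^(k-1), y^k) and I_f(xs, y^k), nonnegative because f is
    mu-strongly convex and L-smooth;
  - the gaps I_g(z^(k+1), z^k, s_g^k), I_g(z^(k+1), xs, sgs) and I_g(xs, z^(k+1), s_g^(k+1)),
    nonnegative because s_g^k is a subgradient of g at the proximal point z^k and sgs = -grad f(xs)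
    is one at the minimiser xs;
  - two squared norms.
  To verify the identity, the four I_f terms are merged by a three-point identity; what is left
  is a multiple of (1 - s) x^k + 2 s z^k - (1 + s) y^k, which vanishes by the definition of y^k.
  The proximal points exist because the prox objective is strongly convex: by the parallelogram law
  a minimising sequence is Cauchy, and its limit is a minimiser because g has a closed epigraph.
*)

lemma directional_derivative_le:
  fixes \<phi> :: "'a::real_normed_vector \<Rightarrow> real"
  assumes deriv: "(\<phi> has_derivative \<phi>') (at u)"
    and bound: "\<And>t. 0 < t \<Longrightarrow> t < 1 \<Longrightarrow> \<phi> (u + t *\<^sub>R d) \<le> \<phi> u + t * c"
  shows "\<phi>' d \<le> c"
proof -
  have "((\<lambda>t. u + t *\<^sub>R d) has_derivative (\<lambda>t. t *\<^sub>R d)) (at 0)"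
    by (auto intro!: derivative_eq_intros)
  from has_derivative_compose[OF this] deriv
  have "((\<lambda>t. \<phi> (u + t *\<^sub>R d)) has_derivative (\<lambda>t. \<phi>' (t *\<^sub>R d))) (at 0)"
    by simp
  moreover have "\<phi>' (t *\<^sub>R d) = t * \<phi>' d" for t
    using linear_scale[OF has_derivative_linear[OF deriv]] by simp
  ultimately have "((\<lambda>t. \<phi> (u + t *\<^sub>R d)) has_real_derivative \<phi>' d) (at 0)"
    by (simp add: has_field_derivative_def mult.commute[of _ "\<phi>' d"])
  then have "((\<lambda>t. (\<phi> (u + t *\<^sub>R d) - \<phi> u) / t) \<longlongrightarrow> \<phi>' d) (at_right 0)"
    unfolding has_field_derivative_iff by (auto intro: tendsto_mono at_le)
  moreover have "\<forall>\<^sub>F t in at_right 0. (\<phi> (u + t *\<^sub>R d) - \<phi> u) / t \<le> c"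
    using eventually_at_right_real[OF zero_less_one]
    by eventually_elim (use bound in \<open>fastforce simp: divide_le_eq mult.commute\<close>)
  ultimately show ?thesis
    by (rule tendsto_upperbound) simp
qed

lemma minimizer_variational_inequality:
  fixes \<phi> :: "'a::real_normed_vector \<Rightarrow> real"
  assumes cvx: "convex_on D g" and u: "u \<in> D" and w: "w \<in> D"
    and deriv: "(\<phi> has_derivative \<phi>') (at u)"
    and min: "\<And>v. v \<in> D \<Longrightarrow> \<phi> u + g u \<le> \<phi> v + g v"
  shows "0 \<le> \<phi>' (w - u) + g w - g u"
proof -
  have "- \<phi>' (w - u) \<le> g w - g u"
  proof (rule directional_derivative_le[where \<phi> = "\<lambda>v. - \<phi> v"])
    show "((\<lambda>v. - \<phi> v) has_derivative (\<lambda>h. - \<phi>' h)) (at u)"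
      using deriv by (rule has_derivative_minus)
    fix t :: real assume t: "0 < t" "t < 1"
    have p: "u + t *\<^sub>R (w - u) = (1 - t) *\<^sub>R u + t *\<^sub>R w"
      by (simp add: algebra_simps)
    have "u + t *\<^sub>R (w - u) \<in> D"
      unfolding p using convex_on_imp_convex[OF cvx] u w t by (simp add: convex_def)
    then have "\<phi> u + g u \<le> \<phi> (u + t *\<^sub>R (w - u)) + g (u + t *\<^sub>R (w - u))"
      by (rule min)
    moreover have "g (u + t *\<^sub>R (w - u)) \<le> (1 - t) * g u + t * g w"
      unfolding p using convex_onD[OF cvx, of t u w] u w t by simp
    ultimately show "- \<phi> (u + t *\<^sub>R (w - u)) \<le> - \<phi> u + t * (g w - g u)"
      by (simp add: algebra_simps)
  qed
  then show ?thesis by simp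
qed

lemma smooth_upper_bound:
  fixes f :: "'a::real_inner \<Rightarrow> real"
  assumes grad: "\<And>u. (f has_derivative (\<lambda>h. inner (gradf u) h)) (at u)"
    and smooth: "\<And>u v. norm (gradf u - gradf v) \<le> L * norm (u - v)"
  shows "f v \<le> f u + inner (gradf u) (v - u) + L / 2 * (norm (v - u))\<^sup>2"
proof -
  define d where "d = v - u"
  define \<phi> where "\<phi> t = f (u + t *\<^sub>R d) - t * inner (gradf u) d - L / 2 * t\<^sup>2 * (norm d)\<^sup>2" for t
  have "\<phi> 1 \<le> \<phi> 0"
  proof (rule DERIV_nonpos_imp_nonincreasing[of 0 1])
    fix t :: real assume t: "0 \<le> t" "t \<le> 1"
    have "((\<lambda>t. u + t *\<^sub>R d) has_derivative (\<lambda>t. t *\<^sub>R d)) (at t)"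
      by (auto intro!: derivative_eq_intros)
    from has_derivative_compose[OF this grad]
    have "((\<lambda>t. f (u + t *\<^sub>R d)) has_real_derivative inner (gradf (u + t *\<^sub>R d)) d) (at t)"
      by (simp add: has_field_derivative_def mult.commute[of _ "inner _ d"])
    then have "DERIV \<phi> t :> inner (gradf (u + t *\<^sub>R d) - gradf u) d - L * t * (norm d)\<^sup>2"
      unfolding \<phi>_def by (auto intro!: derivative_eq_intros simp: inner_diff_left)
    moreover have "inner (gradf (u + t *\<^sub>R d) - gradf u) d \<le> L * t * (norm d)\<^sup>2"
    proof -
      have "inner (gradf (u + t *\<^sub>R d) - gradf u) d \<le> norm (gradf (u + t *\<^sub>R d) - gradf u) * norm d"
        by (rule norm_cauchy_schwarz)
      also have "\<dots> \<le> L * norm (t *\<^sub>R d) * norm d"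
        using smooth[of "u + t *\<^sub>R d" u] by (intro mult_right_mono) auto
      finally show ?thesis using t by (simp add: power2_eq_square)
    qed
    ultimately show "\<exists>y. DERIV \<phi> t :> y \<and> y \<le> 0" by fastforce
  qed simp
  then show ?thesis unfolding \<phi>_def d_def by simp
qed

lemma strongly_convex_lower_bound:
  fixes f :: "'a::real_inner \<Rightarrow> real"
  assumes grad: "\<And>u. (f has_derivative (\<lambda>h. inner (gradf u) h)) (at u)"
    and cvx: "convex_on UNIV (\<lambda>u. f u - \<mu> / 2 * (norm u)\<^sup>2)"
  shows "f u + inner (gradf u) (v - u) + \<mu> / 2 * (norm (v - u))\<^sup>2 \<le> f v"
proof -
  define h where "h w = f w - \<mu> / 2 * (norm w)\<^sup>2" for w
  have "(h has_derivative (\<lambda>k. inner (gradf u - \<mu> *\<^sub>R u) k)) (at u)"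
    unfolding h_def power2_norm_eq_inner
    by (auto intro!: derivative_eq_intros grad simp: fun_eq_iff inner_diff_right inner_commute)
  then have "inner (gradf u - \<mu> *\<^sub>R u) (v - u) \<le> h v - h u"
  proof (rule directional_derivative_le)
    fix t :: real assume "0 < t" "t < 1"
    have p: "u + t *\<^sub>R (v - u) = (1 - t) *\<^sub>R u + t *\<^sub>R v"
      by (simp add: algebra_simps)
    show "h (u + t *\<^sub>R (v - u)) \<le> h u + t * (h v - h u)"
      unfolding p h_def using convex_onD[OF cvx, of t u v] \<open>0 < t\<close> \<open>t < 1\<close>
      by (simp add: field_simps)
  qed
  then show ?thesis
    unfolding h_def power2_norm_eq_inner by (simp add: algebra_simps inner_simps inner_commute)
qed

lemma I_f_nonneg:
  fixes f :: "'a::real_inner \<Rightarrow> real"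
  assumes grad: "\<And>u. (f has_derivative (\<lambda>h. inner (gradf u) h)) (at u)"
    and smooth: "\<And>u v. norm (gradf u - gradf v) \<le> L * norm (u - v)"
    and cvx: "convex_on UNIV (\<lambda>u. f u - \<mu> / 2 * (norm u)\<^sup>2)"
    and "\<mu> < L"
  shows "0 \<le> I_f f gradf \<mu> L a b"
proof -
  define D where "D v u = f v - f u - inner (gradf u) (v - u) - \<mu> / 2 * (norm (v - u))\<^sup>2" for v u
  define \<kappa> where "\<kappa> = L - \<mu>"
  define e where "e = gradf a - gradf b - \<mu> *\<^sub>R (a - b)"
  \<comment> \<open>\<open>w\<close> maximises \<open>inner e (a - w) - \<kappa> / 2 * (norm (w - a))\<^sup>2\<close>, the lower bound for \<open>D a b\<close> below.\<close>
  define w where "w = a - (1 / \<kappa>) *\<^sub>R e"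
  have "\<kappa> > 0" using \<open>\<mu> < L\<close> by (simp add: \<kappa>_def)
  have lower: "0 \<le> D w b"
    using strongly_convex_lower_bound[OF grad cvx, where u = b and v = w] by (simp add: D_def)
  have upper: "D w a \<le> \<kappa> / 2 * (norm (w - a))\<^sup>2"
    using smooth_upper_bound[OF grad smooth, where u = a and v = w]
    by (simp add: D_def \<kappa>_def algebra_simps)
  have three_point: "D a b = D w b - D w a + inner e (a - w)"
    unfolding D_def e_def power2_norm_eq_inner by (simp add: algebra_simps inner_simps inner_commute)
  have aw: "a - w = (1 / \<kappa>) *\<^sub>R e" by (simp add: w_def)
  have "\<kappa> / 2 * (norm (w - a))\<^sup>2 = (norm e)\<^sup>2 / (2 * \<kappa>)"
    unfolding norm_minus_commute[of w] aw using \<open>\<kappa> > 0\<close>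
    by (simp add: power_mult_distrib power2_eq_square field_simps)
  moreover have "inner e (a - w) = (norm e)\<^sup>2 / \<kappa>"
    unfolding aw by (simp add: power2_norm_eq_inner)
  ultimately have "(norm e)\<^sup>2 / (2 * \<kappa>) \<le> D a b"
    using lower upper three_point by (simp add: field_simps)
  moreover have "I_f f gradf \<mu> L a b = D a b - (norm e)\<^sup>2 / (2 * \<kappa>)"
    unfolding I_f_def D_def e_def \<kappa>_def by simp
  ultimately show ?thesis by simp
qed

lemma I_g_minimizer_nonneg:
  fixes f :: "'a::real_inner \<Rightarrow> real"
  assumes grad: "\<And>u. (f has_derivative (\<lambda>h. inner (gradf u) h)) (at u)"
    and cvx: "convex_on D g" and "xs \<in> D" "w \<in> D"
    and min: "\<And>u. u \<in> D \<Longrightarrow> f xs + g xs \<le> f u + g u"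
  shows "0 \<le> I_g g w xs (- gradf xs)"
  using minimizer_variational_inequality[OF cvx \<open>xs \<in> D\<close> \<open>w \<in> D\<close> grad min]
  by (simp add: I_g_def)

lemma Cauchy_if_dist_sq_le:
  fixes X :: "nat \<Rightarrow> 'a::metric_space"
  assumes bound: "\<And>m n. (dist (X m) (X n))\<^sup>2 \<le> e m + e n" and e: "e \<longlonglongrightarrow> 0"
  shows "Cauchy X"
proof (rule metric_CauchyI)
  fix r :: real assume "0 < r"
  then have "0 < r\<^sup>2 / 2" by simp
  then have "\<forall>\<^sub>F n in sequentially. e n < r\<^sup>2 / 2"
    by (rule order_tendstoD(2)[OF e])
  then obtain N where N: "\<And>n. n \<ge> N \<Longrightarrow> e n < r\<^sup>2 / 2"
    by (auto simp: eventually_sequentially)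
  have "dist (X m) (X n) < r" if "m \<ge> N" "n \<ge> N" for m n
  proof -
    have "(dist (X m) (X n))\<^sup>2 < r\<^sup>2"
      using bound[of m n] N[OF \<open>m \<ge> N\<close>] N[OF \<open>n \<ge> N\<close>] by linarith
    then show ?thesis using \<open>0 < r\<close> by (simp add: power_less_imp_less_base)
  qed
  then show "\<exists>N. \<forall>m\<ge>N. \<forall>n\<ge>N. dist (X m) (X n) < r" by blast
qed

lemma closed_epigraph_limit:
  assumes closed: "closed {(x, t). x \<in> D \<and> g x \<le> t}"
    and "\<And>n. X n \<in> D" "\<And>n. g (X n) \<le> T n" and "X \<longlonglongrightarrow> x" "T \<longlonglongrightarrow> \<tau>"
  shows "x \<in> D" "g x \<le> \<tau>"
proof -
  have "(x, \<tau>) \<in> {(x, t). x \<in> D \<and> g x \<le> t}"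
  proof (rule closed_sequentially[OF closed])
    show "(X n, T n) \<in> {(x, t). x \<in> D \<and> g x \<le> t}" for n
      using assms(2,3) by simp
    show "(\<lambda>n. (X n, T n)) \<longlonglongrightarrow> (x, \<tau>)"
      using assms(4,5) by (rule tendsto_Pair)
  qed
  then show "x \<in> D" "g x \<le> \<tau>" by auto
qed

lemma convex_plus_sq_dist_midpoint:
  fixes g :: "'a::real_inner \<Rightarrow> real"
  assumes "convex_on D g" "x \<in> D" "y \<in> D"
  defines "m \<equiv> (1 / 2) *\<^sub>R (x + y)"
  shows "g m + c * (norm (v - m))\<^sup>2
    \<le> ((g x + c * (norm (v - x))\<^sup>2) + (g y + c * (norm (v - y))\<^sup>2)) / 2 - c / 4 * (norm (x - y))\<^sup>2"
proof -
  have mid: "g m \<le> (g x + g y) / 2"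
    using convex_onD[OF assms(1), of "1 / 2" x y] assms(2,3) by (simp add: m_def scaleR_add_right)
  have dist: "(norm (v - m))\<^sup>2 = ((norm (v - x))\<^sup>2 + (norm (v - y))\<^sup>2) / 2 - (norm (x - y))\<^sup>2 / 4"
    unfolding m_def power2_norm_eq_inner by (simp add: inner_simps inner_commute field_simps)
  show ?thesis unfolding dist using mid by (simp add: field_simps)
qed

lemma prox_minimizing_sequence_Cauchy:
  fixes g :: "'a::real_inner \<Rightarrow> real"
  assumes cvx: "convex_on D g" and "0 < \<gamma>"
    and lower: "\<And>w. w \<in> D \<Longrightarrow> m \<le> g w + 1 / (2 * \<gamma>) * (norm (v - w))\<^sup>2"
    and W: "\<And>n. W n \<in> D" "\<And>n. g (W n) + 1 / (2 * \<gamma>) * (norm (v - W n))\<^sup>2 \<le> m + \<delta> n"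
    and \<delta>: "\<delta> \<longlonglongrightarrow> 0"
  shows "Cauchy W"
proof (rule Cauchy_if_dist_sq_le)
  fix i j
  have "(1 / 2) *\<^sub>R (W i + W j) \<in> D"
    using convex_on_imp_convex[OF cvx] W(1) by (simp add: convex_def scaleR_add_right)
  from order_trans[OF lower[OF this]
      convex_plus_sq_dist_midpoint[OF cvx W(1)[of i] W(1)[of j], where c = "1 / (2 * \<gamma>)" and v = v]]
  have "1 / (2 * \<gamma>) / 4 * (norm (W i - W j))\<^sup>2 \<le> (\<delta> i + \<delta> j) / 2"
    using W(2)[of i] W(2)[of j] by argo
  then show "(dist (W i) (W j))\<^sup>2 \<le> 4 * \<gamma> * \<delta> i + 4 * \<gamma> * \<delta> j"
    using \<open>0 < \<gamma>\<close> by (simp add: dist_norm field_simps)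
next
  show "(\<lambda>n. 4 * \<gamma> * \<delta> n) \<longlonglongrightarrow> 0"
    using tendsto_mult_right_zero[OF \<delta>] by simp
qed

lemma prox_exists:
  fixes g :: "'a::{real_inner, complete_space} \<Rightarrow> real"
  assumes g: "proper_convex_lsc D g"
    and subgradient: "\<And>w. w \<in> D \<Longrightarrow> 0 \<le> I_g g w x \<sigma>"
    and "0 < \<gamma>"
  shows "\<exists>z. z \<in> D \<and>
    (\<forall>w\<in>D. g z + 1 / (2 * \<gamma>) * (norm (v - z))\<^sup>2 \<le> g w + 1 / (2 * \<gamma>) * (norm (v - w))\<^sup>2)"
proof -
  have cvx: "convex_on D g" and "D \<noteq> {}" and closed: "closed {(x, t). x \<in> D \<and> g x \<le> t}"
    using g by (auto simp: proper_convex_lsc_def)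
  define \<phi> where "\<phi> w = g w + 1 / (2 * \<gamma>) * (norm (v - w))\<^sup>2" for w
  have "g x + inner \<sigma> (v - x) - \<gamma> / 2 * (norm \<sigma>)\<^sup>2 \<le> \<phi> w" if "w \<in> D" for w
  proof -
    have "0 \<le> 1 / (2 * \<gamma>) * (norm (w - v + \<gamma> *\<^sub>R \<sigma>))\<^sup>2"
      using \<open>0 < \<gamma>\<close> by simp
    also have "\<dots> = 1 / (2 * \<gamma>) * (norm (v - w))\<^sup>2 + inner \<sigma> (w - v) + \<gamma> / 2 * (norm \<sigma>)\<^sup>2"
      unfolding power2_norm_eq_inner using \<open>0 < \<gamma>\<close>
      by (simp add: inner_simps inner_commute field_simps power2_eq_square)
    finally show ?thesis
      using subgradient[OF that] unfolding \<phi>_def I_g_def by (simp add: inner_diff_right)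
  qed
  then have bdd: "bdd_below (\<phi> ` D)" by (meson bdd_belowI2)
  define m where "m = Inf (\<phi> ` D)"
  have m_le: "m \<le> \<phi> w" if "w \<in> D" for w
    unfolding m_def using bdd that by (simp add: cInf_lower)
  define \<delta> where "\<delta> n = inverse (real (Suc n))" for n
  have \<delta>: "\<delta> \<longlonglongrightarrow> 0"
    unfolding \<delta>_def by (rule LIMSEQ_inverse_real_of_nat)
  have "\<exists>w\<in>D. \<phi> w < m + \<delta> n" for n
    using cInf_lessD[of "\<phi> ` D" "m + \<delta> n"] \<open>D \<noteq> {}\<close> unfolding m_def \<delta>_def by auto
  then obtain W where W: "\<And>n. W n \<in> D" "\<And>n. \<phi> (W n) < m + \<delta> n"
    by metis
  have "Cauchy W"
    using prox_minimizing_sequence_Cauchy[OF cvx \<open>0 < \<gamma>\<close> m_le[unfolded \<phi>_def] W(1) _ \<delta>] W(2)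
    unfolding \<phi>_def by (simp add: less_imp_le)
  then obtain z where z: "W \<longlonglongrightarrow> z"
    using Cauchy_convergent_iff convergent_def by blast
  have "(\<lambda>n. m + \<delta> n - 1 / (2 * \<gamma>) * (norm (v - W n))\<^sup>2)
      \<longlonglongrightarrow> m + 0 - 1 / (2 * \<gamma>) * (norm (v - z))\<^sup>2"
    by (intro tendsto_intros z \<delta>)
  from closed_epigraph_limit[OF closed W(1) _ z this]
  have "z \<in> D" "\<phi> z \<le> m"
    using W(2) unfolding \<phi>_def by (auto simp: less_imp_le algebra_simps)
  then show ?thesis
    using m_le unfolding \<phi>_def by force
qed

lemma prox_is_minimizer:
  fixes g :: "'a::{real_inner, complete_space} \<Rightarrow> real"
  assumes "proper_convex_lsc D g" and "\<And>w. w \<in> D \<Longrightarrow> 0 \<le> I_g g w x \<sigma>" and "0 < \<gamma>"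
  shows "prox D g \<gamma> v \<in> D \<and> (\<forall>w\<in>D. g (prox D g \<gamma> v) + 1 / (2 * \<gamma>) * (norm (v - prox D g \<gamma> v))\<^sup>2
           \<le> g w + 1 / (2 * \<gamma>) * (norm (v - w))\<^sup>2)"
  unfolding prox_def by (rule someI_ex[OF prox_exists[OF assms]])

lemma prox_subgradient:
  fixes g :: "'a::{real_inner, complete_space} \<Rightarrow> real" and v w :: 'a
  assumes g: "proper_convex_lsc D g" and subgradient: "\<And>w. w \<in> D \<Longrightarrow> 0 \<le> I_g g w x \<sigma>"
    and "0 < \<gamma>" and "w \<in> D"
  defines "p \<equiv> prox D g \<gamma> v"
  shows "0 \<le> I_g g w p ((1 / \<gamma>) *\<^sub>R (v - p))"
proof -
  have cvx: "convex_on D g" using g by (simp add: proper_convex_lsc_def)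
  have p: "p \<in> D"
    "\<And>w. w \<in> D \<Longrightarrow> 1 / (2 * \<gamma>) * (norm (v - p))\<^sup>2 + g p \<le> 1 / (2 * \<gamma>) * (norm (v - w))\<^sup>2 + g w"
    using prox_is_minimizer[OF g subgradient \<open>0 < \<gamma>\<close>, of v] unfolding p_def by auto
  have "((\<lambda>z. 1 / (2 * \<gamma>) * (norm (v - z))\<^sup>2) has_derivative (\<lambda>k. - (1 / \<gamma>) * inner (v - p) k)) (at p)"
    unfolding power2_norm_eq_inner
    using \<open>0 < \<gamma>\<close>
    by (auto intro!: derivative_eq_intros simp: fun_eq_iff inner_diff_right inner_commute field_simps)
  from minimizer_variational_inequality[OF cvx p(1) \<open>w \<in> D\<close> this p(2)]
  show ?thesis by (simp add: I_g_def inner_diff_right diff_divide_distrib)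
qed

lemma I_f_three_point:
  fixes f :: "'a::real_inner \<Rightarrow> real" and gradf :: "'a \<Rightarrow> 'a" and a b c :: 'a and \<alpha> \<beta> \<mu> L :: real
  assumes "\<alpha> + \<beta> = 1"
  defines "A \<equiv> gradf a - gradf c - \<mu> *\<^sub>R (a - c)" and "B \<equiv> gradf b - gradf c - \<mu> *\<^sub>R (b - c)"
  shows "\<alpha> * (I_f f gradf \<mu> L a c - I_f f gradf \<mu> L a b) - I_f f gradf \<mu> L b c - \<beta> * I_f f gradf \<mu> L c b
       = inner B (\<alpha> *\<^sub>R (a - c) - (b - c)) - inner B (\<alpha> *\<^sub>R A - B) / (L - \<mu>)"
proof -
  have \<beta>: "\<beta> = 1 - \<alpha>" using assms(1) by simp
  define k where "k = 1 / (2 * (L - \<mu>))"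
  have I_f_split: "I_f f gradf \<mu> L u v = f u - f v - inner (gradf v) (u - v) - \<mu> / 2 * (norm (u - v))\<^sup>2
      - k * (norm (gradf u - gradf v - \<mu> *\<^sub>R (u - v)))\<^sup>2" for u v
    by (simp add: I_f_def k_def)
  have gaps: "gradf a - gradf c - \<mu> *\<^sub>R (a - c) = A" "gradf b - gradf c - \<mu> *\<^sub>R (b - c) = B"
      "gradf a - gradf b - \<mu> *\<^sub>R (a - b) = A - B" "gradf c - gradf b - \<mu> *\<^sub>R (c - b) = - B"
    by (simp_all add: A_def B_def algebra_simps)
  have gap_norms: "\<alpha> * ((norm A)\<^sup>2 - (norm (A - B))\<^sup>2) - (norm B)\<^sup>2 - \<beta> * (norm (- B))\<^sup>2
      = 2 * inner B (\<alpha> *\<^sub>R A - B)" (is "?gaps = _")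
    unfolding \<beta> power2_norm_eq_inner by (simp add: algebra_simps inner_commute)
  have bregman: "\<alpha> * (f a - f c - inner (gradf c) (a - c) - \<mu> / 2 * (norm (a - c))\<^sup>2
        - (f a - f b - inner (gradf b) (a - b) - \<mu> / 2 * (norm (a - b))\<^sup>2))
      - (f b - f c - inner (gradf c) (b - c) - \<mu> / 2 * (norm (b - c))\<^sup>2)
      - \<beta> * (f c - f b - inner (gradf b) (c - b) - \<mu> / 2 * (norm (c - b))\<^sup>2)
      = inner B (\<alpha> *\<^sub>R (a - c) - (b - c))" (is "?bregman = _")
    unfolding \<beta> B_def power2_norm_eq_inner
    by (simp add: field_simps inner_simps inner_commute)
  have "\<alpha> * (I_f f gradf \<mu> L a c - I_f f gradf \<mu> L a b) - I_f f gradf \<mu> L b c - \<beta> * I_f f gradf \<mu> L c b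
      = ?bregman - k * ?gaps"
    unfolding I_f_split gaps by (simp add: algebra_simps)
  also have "\<dots> = inner B (\<alpha> *\<^sub>R (a - c) - (b - c)) - inner B (\<alpha> *\<^sub>R A - B) / (L - \<mu>)"
    unfolding bregman gap_norms k_def by (cases "L = \<mu>") (simp_all add: field_simps)
  finally show ?thesis .
qed

text \<open>What remains of \<open>(1 - s)\<^sup>2 V\<^sub>k - V\<^sub>k\<^sub>+\<^sub>1\<close> once the interpolation and subgradient gaps are
  subtracted, written relative to \<open>xs\<close> and \<open>gs = gradf xs\<close>.\<close>

lemma tmm_key_identity:
  fixes y0 y1 z1 z2 x1 g0 g1 t1 t2 xs gs :: "'a::real_inner" and s L :: real
  assumes "L \<noteq> 0"
    and x1: "x1 = y0 - (1 / L) *\<^sub>R (g0 + t1)"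
    and t2: "t2 = (s * L) *\<^sub>R ((1 - s) *\<^sub>R z1 + s *\<^sub>R y1 - z2) - g1"
  defines "A \<equiv> g0 - gs - (s\<^sup>2 * L) *\<^sub>R (y0 - xs)" and "B \<equiv> g1 - gs - (s\<^sup>2 * L) *\<^sub>R (y1 - xs)"
  shows "(1 - s\<^sup>2) * inner B ((1 - s)\<^sup>2 *\<^sub>R (y0 - xs) - (y1 - xs)) - inner B ((1 - s)\<^sup>2 *\<^sub>R A - B) / L
      + (s * (1 - s)\<^sup>2 * inner (t1 + gs) ((z2 - xs) - (1 - s) *\<^sub>R (z1 - xs))
        - 2 * s * inner (t2 + gs) (z2 - xs))
      + ((1 - s)\<^sup>2 * (1 / (2 * L) * (norm (t1 + gs))\<^sup>2 + s\<^sup>2 * L * (norm (z1 - xs))\<^sup>2)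
        - (1 / (2 * L) * (norm (t2 + gs))\<^sup>2 + s\<^sup>2 * L * (norm (z2 - xs))\<^sup>2)
        - (2 * s - s\<^sup>2) / (2 * L) * (norm (t2 + gs))\<^sup>2 - (1 - s)\<^sup>2 / (2 * L) * (norm (t1 - t2))\<^sup>2)
    = (1 - s) * inner B ((2 * s) *\<^sub>R z1 + (1 - s) *\<^sub>R x1 - (1 + s) *\<^sub>R y1)"
  unfolding x1 t2 A_def B_def power2_norm_eq_inner
  by (simp add: field_simps assms(1) inner_simps inner_commute power2_eq_square)

text \<open>With \<open>s = sqrt q\<close>, \<open>tmm_lyapunov f gradf g \<mu> L s xs (y (k - 1)) (z k) (sg k)\<close> is the paper's \<open>V\<^sub>k\<close>.\<close>

definition tmm_lyapunov ::
    "('a::real_inner \<Rightarrow> real) \<Rightarrow> ('a \<Rightarrow> 'a) \<Rightarrow> ('a \<Rightarrow> real) \<Rightarrow> real \<Rightarrow> real \<Rightarrow> real \<Rightarrow> 'a \<Rightarrow> 'a \<Rightarrow> 'a \<Rightarrow> 'a \<Rightarrow> real"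
  where "tmm_lyapunov f gradf g \<mu> L s xs y z t =
    (1 - s\<^sup>2) * I_f f gradf \<mu> L y xs + s\<^sup>2 * I_g g xs z t + s * (s - 1) * I_g g z xs (- gradf xs)
    + 1 / (2 * L) * (norm (t + gradf xs))\<^sup>2 + \<mu> * (norm (z - xs))\<^sup>2"

lemma tmm_lyapunov_identity:
  fixes f g :: "'a::real_inner \<Rightarrow> real" and gradf :: "'a \<Rightarrow> 'a"
  assumes s: "0 < s" "s < 1" and L: "0 < L" and \<mu>: "\<mu> = s\<^sup>2 * L"
    and x1: "x1 = y0 - (1 / L) *\<^sub>R (gradf y0 + t1)"
    and y1: "(1 + s) *\<^sub>R y1 = (2 * s) *\<^sub>R z1 + (1 - s) *\<^sub>R x1"
    and t2: "t2 = (s * L) *\<^sub>R ((1 - s) *\<^sub>R z1 + s *\<^sub>R y1 - z2) - gradf y1"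
  shows "(1 - s)\<^sup>2 * tmm_lyapunov f gradf g \<mu> L s xs y0 z1 t1 - tmm_lyapunov f gradf g \<mu> L s xs y1 z2 t2
    = (1 - s)\<^sup>2 * (1 - s\<^sup>2) * I_f f gradf \<mu> L y0 y1 + (1 - s\<^sup>2) * (2 * s - s\<^sup>2) * I_f f gradf \<mu> L xs y1
      + (1 - s)\<^sup>2 * s * I_g g z2 z1 t1 + (2 * s - s\<^sup>2) * (1 + s) * I_g g z2 xs (- gradf xs)
      + (2 * s - s\<^sup>2) * I_g g xs z2 t2
      + (2 * s - s\<^sup>2) / (2 * L) * (norm (t2 + gradf xs))\<^sup>2 + (1 - s)\<^sup>2 / (2 * L) * (norm (t1 - t2))\<^sup>2"
    (is "_ = ?rhs")
proof -
  define gs where "gs = gradf xs"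
  have "s\<^sup>2 < 1" using s by (simp add: power_less_one_iff)
  then have "1 - s\<^sup>2 \<noteq> 0" "L \<noteq> 0" using L by simp_all
  have "L - \<mu> = L * (1 - s\<^sup>2)" by (simp add: \<mu> algebra_simps)
  have g_part: "(1 - s)\<^sup>2 * (s\<^sup>2 * I_g g xs z1 t1 + s * (s - 1) * I_g g z1 xs (- gs))
      - (s\<^sup>2 * I_g g xs z2 t2 + s * (s - 1) * I_g g z2 xs (- gs))
      - (1 - s)\<^sup>2 * s * I_g g z2 z1 t1 - (2 * s - s\<^sup>2) * (1 + s) * I_g g z2 xs (- gs)
      - (2 * s - s\<^sup>2) * I_g g xs z2 t2
    = s * (1 - s)\<^sup>2 * inner (t1 + gs) ((z2 - xs) - (1 - s) *\<^sub>R (z1 - xs))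
      - 2 * s * inner (t2 + gs) (z2 - xs)"
    (is "?g_lhs = ?g_rhs")
    unfolding I_g_def by (simp add: algebra_simps inner_simps power2_eq_square)
  have f_part: "(1 - s)\<^sup>2 * (1 - s\<^sup>2) * I_f f gradf \<mu> L y0 xs - (1 - s\<^sup>2) * I_f f gradf \<mu> L y1 xs
      - (1 - s)\<^sup>2 * (1 - s\<^sup>2) * I_f f gradf \<mu> L y0 y1 - (1 - s\<^sup>2) * (2 * s - s\<^sup>2) * I_f f gradf \<mu> L xs y1
    = (1 - s\<^sup>2) * inner (gradf y1 - gs - \<mu> *\<^sub>R (y1 - xs)) ((1 - s)\<^sup>2 *\<^sub>R (y0 - xs) - (y1 - xs))
      - inner (gradf y1 - gs - \<mu> *\<^sub>R (y1 - xs))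
          ((1 - s)\<^sup>2 *\<^sub>R (gradf y0 - gs - \<mu> *\<^sub>R (y0 - xs)) - (gradf y1 - gs - \<mu> *\<^sub>R (y1 - xs))) / L"
    (is "?f_lhs = ?f_rhs")
  proof -
    have "(1 - s)\<^sup>2 + (2 * s - s\<^sup>2) = 1" by (simp add: power2_eq_square algebra_simps)
    note three_point = I_f_three_point[OF this, of f gradf \<mu> L y0 xs y1, folded gs_def]
    have scale: "(1 - s\<^sup>2) * (P - Q / (L - \<mu>)) = (1 - s\<^sup>2) * P - Q / L" for P Q
      unfolding \<open>L - \<mu> = L * (1 - s\<^sup>2)\<close> using \<open>1 - s\<^sup>2 \<noteq> 0\<close> \<open>L \<noteq> 0\<close> by (simp add: field_simps)
    show ?thesis
      unfolding scale[symmetric] three_point[symmetric] by (simp add: algebra_simps)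
  qed
  have "(1 - s)\<^sup>2 * tmm_lyapunov f gradf g \<mu> L s xs y0 z1 t1 - tmm_lyapunov f gradf g \<mu> L s xs y1 z2 t2
      - ?rhs
    = ?f_lhs + ?g_lhs
      + ((1 - s)\<^sup>2 * (1 / (2 * L) * (norm (t1 + gs))\<^sup>2 + \<mu> * (norm (z1 - xs))\<^sup>2)
        - (1 / (2 * L) * (norm (t2 + gs))\<^sup>2 + \<mu> * (norm (z2 - xs))\<^sup>2)
        - (2 * s - s\<^sup>2) / (2 * L) * (norm (t2 + gs))\<^sup>2 - (1 - s)\<^sup>2 / (2 * L) * (norm (t1 - t2))\<^sup>2)"
    unfolding tmm_lyapunov_def gs_def by (simp add: algebra_simps)
  also have "\<dots> = 0"
    unfolding f_part g_part
    using tmm_key_identity[OF \<open>L \<noteq> 0\<close> x1 t2, where xs = xs and gs = gs] y1 by (simp add: \<mu>)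
  finally show ?thesis by simp
qed

lemma tmm_lyapunov_decrease:
  fixes f g :: "'a::real_inner \<Rightarrow> real" and gradf :: "'a \<Rightarrow> 'a"
  assumes s: "0 < s" "s < 1" and L: "0 < L" and \<mu>: "\<mu> = s\<^sup>2 * L"
    and x1: "x1 = y0 - (1 / L) *\<^sub>R (gradf y0 + t1)"
    and y1: "(1 + s) *\<^sub>R y1 = (2 * s) *\<^sub>R z1 + (1 - s) *\<^sub>R x1"
    and t2: "t2 = (s * L) *\<^sub>R ((1 - s) *\<^sub>R z1 + s *\<^sub>R y1 - z2) - gradf y1"
    and I_f: "\<And>a b. 0 \<le> I_f f gradf \<mu> L a b"
    and "0 \<le> I_g g z2 z1 t1" "0 \<le> I_g g z2 xs (- gradf xs)" "0 \<le> I_g g xs z2 t2"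
  shows "tmm_lyapunov f gradf g \<mu> L s xs y1 z2 t2 \<le> (1 - s)\<^sup>2 * tmm_lyapunov f gradf g \<mu> L s xs y0 z1 t1"
proof -
  have "s\<^sup>2 \<le> s" using s by (simp add: power2_eq_square mult_left_le_one_le)
  then have "0 \<le> 1 - s\<^sup>2" "0 \<le> 2 * s - s\<^sup>2" using s by simp_all
  then have "0 \<le> (1 - s)\<^sup>2 * tmm_lyapunov f gradf g \<mu> L s xs y0 z1 t1 - tmm_lyapunov f gradf g \<mu> L s xs y1 z2 t2"
    unfolding tmm_lyapunov_identity[OF s L \<mu> x1 y1 t2]
    using s L I_f assms(9-11) by (intro add_nonneg_nonneg mult_nonneg_nonneg divide_nonneg_pos) auto
  then show ?thesis by simp
qed

theorem lemma5:
  fixes f :: "'a::{real_inner, complete_space} \<Rightarrow> real"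
    and gradf :: "'a \<Rightarrow> 'a"
    and g :: "'a \<Rightarrow> real" and D :: "'a set"
    and \<mu> L :: real
    and x0 xs :: 'a
    and x y z zb :: "nat \<Rightarrow> 'a"
  assumes mu_pos: "0 < \<mu>" and mu_L: "\<mu> < L"
    and grad: "\<And>u. (f has_derivative (\<lambda>h. inner (gradf u) h)) (at u)"
    and strongly_convex: "convex_on UNIV (\<lambda>u. f u - \<mu> / 2 * (norm u)\<^sup>2)"
    and smooth: "\<And>u v. norm (gradf u - gradf v) \<le> L * norm (u - v)"
    and g_prop: "proper_convex_lsc D g"
    and xs_min: "xs \<in> D" "\<And>u. u \<in> D \<Longrightarrow> f xs + g xs \<le> f u + g u"
    and xs_unique: "\<And>u. u \<in> D \<Longrightarrow> f u + g u \<le> f xs + g xs \<Longrightarrow> u = xs"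
    and x_0: "x 0 = x0" and z_0: "z 0 = x0"
  defines "q \<equiv> \<mu> / L"
  assumes y_def: "\<And>k. y k = (2 * sqrt q / (1 + sqrt q)) *\<^sub>R z k + ((1 - sqrt q) / (1 + sqrt q)) *\<^sub>R x k"
    and zb_def: "\<And>k. zb (Suc k) = (1 - sqrt q) *\<^sub>R z k + sqrt q *\<^sub>R y k - (1 / (sqrt q * L)) *\<^sub>R gradf (y k)"
    and z_def: "\<And>k. z (Suc k) = prox D g (1 / (sqrt q * L)) (zb (Suc k))"
    and x_def: "\<And>k. x (Suc k) = y k - (1 / L) *\<^sub>R gradf (y k) - sqrt q *\<^sub>R (zb (Suc k) - z (Suc k))"
  defines "sg \<equiv> (\<lambda>k. (sqrt q * L) *\<^sub>R (zb k - z k))"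
    and "sgs \<equiv> - gradf xs"
  defines "V \<equiv> (\<lambda>k. (1 - q) * I_f f gradf \<mu> L (y (k - 1)) xs + q * I_g g xs (z k) (sg k)
              + sqrt q * (sqrt q - 1) * I_g g (z k) xs sgs
              + 1 / (2 * L) * (norm (sg k - sgs))\<^sup>2 + \<mu> * (norm (z k - xs))\<^sup>2)"
  shows "\<forall>k\<ge>1. V (Suc k) \<le> (1 - sqrt q)\<^sup>2 * V k"
proof -
  define s where "s = sqrt q"
  have "0 < L" using mu_pos mu_L by linarith
  then have s: "0 < s" "s < 1" and q: "sqrt q = s" "q = s\<^sup>2" "\<bar>s\<bar> = s" and \<mu>: "\<mu> = s\<^sup>2 * L"
    using mu_pos mu_L by (simp_all add: s_def q_def)
  have opt: "0 \<le> I_g g w xs (- gradf xs)" if "w \<in> D" for w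
    using g_prop xs_min that by (intro I_g_minimizer_nonneg[OF grad]) (auto simp: proper_convex_lsc_def)
  have \<gamma>: "0 < 1 / (s * L)" using s \<open>0 < L\<close> by simp
  have z_mem: "z (Suc k) \<in> D" for k
    using prox_is_minimizer[OF g_prop opt \<gamma>] by (simp add: z_def q)
  have z_sub: "0 \<le> I_g g w (z (Suc k)) (sg (Suc k))" if "w \<in> D" for w k
    using prox_subgradient[OF g_prop opt \<gamma> that] by (simp add: z_def sg_def q)
  have V: "V k = tmm_lyapunov f gradf g \<mu> L s xs (y (k - 1)) (z k) (sg k)" for k
    by (simp add: V_def tmm_lyapunov_def sgs_def q)
  show ?thesis
  proof (intro allI impI)
    fix k :: nat assume "1 \<le> k"
    then obtain m where k: "k = Suc m" by (cases k) auto
    show "V (Suc k) \<le> (1 - sqrt q)\<^sup>2 * V k"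
      unfolding V k q(1) diff_Suc_1
    proof (rule tmm_lyapunov_decrease[OF s \<open>0 < L\<close> \<mu>])
      show "x (Suc m) = y m - (1 / L) *\<^sub>R (gradf (y m) + sg (Suc m))"
        using \<open>0 < L\<close> by (simp add: x_def sg_def q algebra_simps)
      show "(1 + s) *\<^sub>R y (Suc m) = (2 * s) *\<^sub>R z (Suc m) + (1 - s) *\<^sub>R x (Suc m)"
        using s by (simp add: y_def[of "Suc m"] q scaleR_add_right)
      show "sg (Suc (Suc m)) = (s * L) *\<^sub>R ((1 - s) *\<^sub>R z (Suc m) + s *\<^sub>R y (Suc m) - z (Suc (Suc m)))
          - gradf (y (Suc m))"
        using s \<open>0 < L\<close> by (simp add: sg_def zb_def q algebra_simps)
    qed (use I_f_nonneg[OF grad smooth strongly_convex mu_L] z_sub z_mem opt xs_min(1) in auto)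
  qed
qed

end
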